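(* Let $h>s>0$, $w_1,w_2>0$ and $t\in[0,w_2)$. Let $P_1$ be the flat surface with boundary obtained from the rectangle $[0,w_1]\times[0,h]$ by gluing $(x,h)\sim(x,0)$ for $x\in[0,w_1]$ and $(0,y)\sim(w_1,y)$ for $y\in[s,h]$, the segments $\{0\}\times[0,s]$ and $\{w_1\}\times[0,s]$ being left unglued (they form the slit). Let $P_2$ be obtained from $[0,w_2]\times[0,h]$ by gluing $(x,h)\sim(x+t \bmod w_2,\,0)$ for $x\in[0,w_2]$ and $(0,y)\sim(w_2,y)$ for $y\in[s,h]$, with $\{0\}\times[0,s]$ and $\{w_2\}\times[0,s]$ unglued. Suppose $\mathrm{Area}(P_1)\ge\mathrm{Area}(P_2)$, and that for every cylinder $L_1$ on $P_1$ there is a cylinder $L_2$ on $P_2$ of the same slope with $\frac{\mathrm{Area}(L_1)}{\mathrm{Area}(P_1)}=\frac{\mathrm{Area}(L_2)}{\mathrm{Area}(P_2)}$. Then $P_2$ is isometric to $P_1$.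
   Context: A cylinder on $P_i$ is a maximal open subset of the interior of $P_i$ isometric (by a translation-structure-preserving isometry) to a Euclidean cylinder $(\mathbb{R}/c\mathbb{Z})\times(0,\eta)$; its slope is the direction of its core curves. *)

theory Defs
  imports "HOL-Analysis.Analysis"
begin

text \<open>Gluing the rectangle [0,w] x [0,h] via (x,h) ~ (x+t mod w, 0) and
(0,y) ~ (w,y) (y in [s,h]) gives the flat torus C / lat w h t, where the lattice is
generated by w and (-t) + i h, cut open along the (image of the) vertical slit
{0} x [0,s].  The interior of P is therefore the torus minus the slit; we work with
its lift to C, a lattice-invariant open subset of C.\<close>

definition lat :: "real \<Rightarrow> real \<Rightarrow> real \<Rightarrow> complex set" where
  "lat w h t = {of_int m * complex_of_real w + of_int n * Complex (-t) h | m n. True}"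

definition slit_lift :: "real \<Rightarrow> real \<Rightarrow> real \<Rightarrow> real \<Rightarrow> complex set" where
  "slit_lift w h t s = {Complex 0 y + l | y l. 0 \<le> y \<and> y \<le> s \<and> l \<in> lat w h t}"

definition int_lift :: "real \<Rightarrow> real \<Rightarrow> real \<Rightarrow> real \<Rightarrow> complex set" where
  "int_lift w h t s = - slit_lift w h t s"

definition surf_area :: "real \<Rightarrow> real \<Rightarrow> real" where
  "surf_area w h = w * h"

text \<open>L (a lattice-invariant subset of C, i.e. a subset of the interior of P) is the
image of the Euclidean cylinder (R/cZ) x (0,eta) under the injective map
(u,v) \<mapsto> [b + (u + i v) * om], |om| = 1, which preserves the translation structure
up to the rotation by om.  The core curves have direction om (slope: om up to sign);
the area of L is c * eta.\<close>
definition cyl_param ::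
  "real \<Rightarrow> real \<Rightarrow> real \<Rightarrow> real \<Rightarrow> complex set \<Rightarrow> complex \<Rightarrow> real \<Rightarrow> real \<Rightarrow> bool" where
  "cyl_param w h t s L om c eta \<longleftrightarrow>
     (\<exists>b. 0 < c \<and> 0 < eta \<and> cmod om = 1 \<and>
        complex_of_real c * om \<in> lat w h t \<and>
        (\<forall>u v. 0 < v \<and> v < eta \<longrightarrow> b + Complex u v * om \<in> int_lift w h t s) \<and>
        (\<forall>u v u' v'. 0 < v \<and> v < eta \<and> 0 < v' \<and> v' < eta \<and>
            (b + Complex u v * om) - (b + Complex u' v' * om) \<in> lat w h t
            \<longrightarrow> v = v' \<and> (u - u') / c \<in> \<int>) \<and>
        L = {z. \<exists>u v. 0 < v \<and> v < eta \<and> z - (b + Complex u v * om) \<in> lat w h t})"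

definition is_cyl :: "real \<Rightarrow> real \<Rightarrow> real \<Rightarrow> real \<Rightarrow> complex set \<Rightarrow> bool" where
  "is_cyl w h t s L \<longleftrightarrow> (\<exists>om c eta. cyl_param w h t s L om c eta)"

definition cylinder ::
  "real \<Rightarrow> real \<Rightarrow> real \<Rightarrow> real \<Rightarrow> complex set \<Rightarrow> complex \<Rightarrow> real \<Rightarrow> real \<Rightarrow> bool" where
  "cylinder w h t s L om c eta \<longleftrightarrow>
     cyl_param w h t s L om c eta \<and> (\<forall>L'. is_cyl w h t s L' \<and> L \<subseteq> L' \<longrightarrow> L' = L)"

text \<open>P(w,h,t,s) is isometric to P(w',h',t',s'): there is a bijection between the
interiors (given by a lattice-equivariant map f on lifts) which is locally a
Euclidean isometry (a Riemannian isometry of the flat interiors; since P is the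
metric completion of its interior, this is the same as P being isometric to P').\<close>
definition flat_isometric ::
  "real \<Rightarrow> real \<Rightarrow> real \<Rightarrow> real \<Rightarrow> real \<Rightarrow> real \<Rightarrow> real \<Rightarrow> real \<Rightarrow> bool" where
  "flat_isometric w h t s w' h' t' s' \<longleftrightarrow>
     (\<exists>f :: complex \<Rightarrow> complex.
        (\<forall>z \<in> int_lift w h t s. f z \<in> int_lift w' h' t' s') \<and>
        (\<forall>z \<in> int_lift w h t s. \<forall>l \<in> lat w h t. f (z + l) - f z \<in> lat w' h' t') \<and>
        (\<forall>z \<in> int_lift w h t s. \<forall>z' \<in> int_lift w h t s.
            f z - f z' \<in> lat w' h' t' \<longrightarrow> z - z' \<in> lat w h t) \<and>
        (\<forall>y \<in> int_lift w' h' t' s'. \<exists>z \<in> int_lift w h t s. f z - y \<in> lat w' h' t') \<and>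
        (\<forall>z \<in> int_lift w h t s. \<exists>r > 0. ball z r \<subseteq> int_lift w h t s \<and>
            (\<forall>a \<in> ball z r. \<forall>b \<in> ball z r. dist (f a) (f b) = dist a b)))"

end

theory Submission
  imports Defs
begin

text \<open>On P(w1,h,0,s) the cylinder whose core curves are parallel to the diagonal w1 + ih of
the rectangle fills everything but the slit, so it has area w1(h - s). By hypothesis P2 carries a
cylinder of the same slope and of area w2(h - s). Its circumference is a primitive lattice vector
m w2 - n t + i n h of slope h/w1. Projecting orthogonally to the core curves, the lattice becomes a
cyclic group of period w2 h / c and every translate of the slit an interval of length
s |n| w1 / c which the height interval of the cylinder must avoid; hence
w2 (h - s) + s |n| w1 \<le> w2 h, i.e. |n| w1 \<le> w2 \<le> w1. So |n| = 1 and w2 = w1, and the real part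
of the circumference shows that t is a multiple of w1 in [0, w1), i.e. t = 0.\<close>

lemma mem_lat_iff:
  "l \<in> lat w h t \<longleftrightarrow> (\<exists>m n :: int. l = Complex (of_int m * w - of_int n * t) (of_int n * h))"
  unfolding lat_def by (auto simp: complex_eq_iff)

lemma mem_lat0_iff: "l \<in> lat w h 0 \<longleftrightarrow> (\<exists>m n :: int. l = Complex (of_int m * w) (of_int n * h))"
  unfolding mem_lat_iff by simp

lemma lat_zero: "0 \<in> lat w h t"
  unfolding mem_lat_iff by (intro exI[of _ 0]) (simp add: complex_eq_iff)

lemma lat_add:
  assumes "a \<in> lat w h t" "b \<in> lat w h t"
  shows "a + b \<in> lat w h t"
proof -
  obtain m n m' n' :: int where
    "a = Complex (of_int m * w - of_int n * t) (of_int n * h)"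
    "b = Complex (of_int m' * w - of_int n' * t) (of_int n' * h)"
    using assms unfolding mem_lat_iff by blast
  then have "a + b = Complex (of_int (m + m') * w - of_int (n + n') * t) (of_int (n + n') * h)"
    by (simp add: complex_eq_iff algebra_simps)
  then show ?thesis
    unfolding mem_lat_iff by blast
qed

lemma lat_of_int_mult:
  assumes "l \<in> lat w h t"
  shows "of_int k * l \<in> lat w h t"
proof -
  obtain m n :: int where l: "l = Complex (of_int m * w - of_int n * t) (of_int n * h)"
    using assms unfolding mem_lat_iff by blast
  have "of_int k * l = Complex (of_int (k * m) * w - of_int (k * n) * t) (of_int (k * n) * h)"
    unfolding l by (simp add: complex_eq_iff algebra_simps)
  then show ?thesis
    unfolding mem_lat_iff by blast
qed

lemma lat_uminus: "a \<in> lat w h t \<Longrightarrow> - a \<in> lat w h t"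
  using lat_of_int_mult[of a w h t "- 1"] by simp

lemma Complex_add_lat_mem_slit_lift:
  "0 \<le> y \<Longrightarrow> y \<le> s \<Longrightarrow> l \<in> lat w h t \<Longrightarrow> Complex 0 y + l \<in> slit_lift w h t s"
  unfolding slit_lift_def by blast

lemma slit_lift_add_lat: "z \<in> slit_lift w h t s \<Longrightarrow> l \<in> lat w h t \<Longrightarrow> z + l \<in> slit_lift w h t s"
  unfolding slit_lift_def using lat_add by (force simp: add.assoc)

lemma int_lift_add_lat: "z \<in> int_lift w h t s \<Longrightarrow> l \<in> lat w h t \<Longrightarrow> z + l \<in> int_lift w h t s"
  unfolding int_lift_def using slit_lift_add_lat[of "z + l" w h t s "- l"] lat_uminus by force

lemma zero_notin_int_lift: "0 \<le> s \<Longrightarrow> 0 \<notin> int_lift w h t s"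
  using Complex_add_lat_mem_slit_lift[of 0 s 0 w h t] lat_zero
  by (simp add: int_lift_def zero_complex.code[symmetric])

lemma mem_slit_lift0_iff:
  assumes "w \<noteq> 0"
  shows "z \<in> slit_lift w h 0 s \<longleftrightarrow>
           Re z / w \<in> \<int> \<and> (\<exists>k::int. 0 \<le> Im z + of_int k * h \<and> Im z + of_int k * h \<le> s)"
proof
  assume "z \<in> slit_lift w h 0 s"
  then obtain y m n where "0 \<le> y" "y \<le> s" "z = Complex 0 y + Complex (of_int m * w) (of_int n * h)"
    unfolding slit_lift_def mem_lat0_iff by blast
  with assms show "Re z / w \<in> \<int> \<and> (\<exists>k::int. 0 \<le> Im z + of_int k * h \<and> Im z + of_int k * h \<le> s)"
    by (auto intro!: exI[of _ "- n"])
next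
  assume "Re z / w \<in> \<int> \<and> (\<exists>k::int. 0 \<le> Im z + of_int k * h \<and> Im z + of_int k * h \<le> s)"
  then obtain m k :: int where m: "Re z / w = of_int m" and k: "0 \<le> Im z + of_int k * h" "Im z + of_int k * h \<le> s"
    by (auto elim!: Ints_cases)
  have "Complex (of_int m * w) (of_int (- k) * h) \<in> lat w h 0"
    unfolding mem_lat0_iff by blast
  moreover have "z = Complex 0 (Im z + of_int k * h) + Complex (of_int m * w) (of_int (- k) * h)"
    using m assms by (simp add: complex_eq_iff field_simps)
  ultimately show "z \<in> slit_lift w h 0 s"
    using Complex_add_lat_mem_slit_lift k by metis
qed

lemma ex_int_shift_in_gap_iff:
  fixes x h s :: real
  assumes "0 \<le> s" "s < h"
  shows "(\<exists>k::int. s < x + of_int k * h \<and> x + of_int k * h < h) \<longleftrightarrow>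
         \<not> (\<exists>k::int. 0 \<le> x + of_int k * h \<and> x + of_int k * h \<le> s)"
proof
  assume "\<exists>k::int. s < x + of_int k * h \<and> x + of_int k * h < h"
  then obtain k :: int where k: "s < x + of_int k * h" "x + of_int k * h < h" by blast
  show "\<not> (\<exists>k::int. 0 \<le> x + of_int k * h \<and> x + of_int k * h \<le> s)"
  proof
    assume "\<exists>j::int. 0 \<le> x + of_int j * h \<and> x + of_int j * h \<le> s"
    then obtain j :: int where j: "0 \<le> x + of_int j * h" "x + of_int j * h \<le> s" by blast
    have "of_int j * h < of_int k * h"
      using k j by linarith
    moreover have "of_int k * h < of_int (j + 1) * h"
      using k j unfolding of_int_add distrib_right by linarith
    ultimately have "j < k" "k < j + 1"
      using assms by (simp_all add: mult_less_cancel_right del: of_int_add)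
    then show False by simp
  qed
next
  assume none: "\<not> (\<exists>k::int. 0 \<le> x + of_int k * h \<and> x + of_int k * h \<le> s)"
  define k where "k = - \<lfloor>x / h\<rfloor>"
  have "0 \<le> x + of_int k * h" "x + of_int k * h < h"
    using assms floor_divide_lower[of h x] floor_divide_upper[of h x]
    unfolding k_def by (auto simp: distrib_right)
  with none show "\<exists>k::int. s < x + of_int k * h \<and> x + of_int k * h < h"
    by (meson not_le)
qed

lemma open_int_lift0:
  assumes "w \<noteq> 0" "0 \<le> s" "s < h"
  shows "open (int_lift w h 0 s)"
proof -
  have "int_lift w h 0 s =
          {z. Re z / w \<notin> \<int>} \<union> {z. \<exists>k::int. s < Im z + of_int k * h \<and> Im z + of_int k * h < h}"
    using assms by (auto simp: int_lift_def mem_slit_lift0_iff ex_int_shift_in_gap_iff)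
  moreover have "closed ((\<lambda>z. Re z / w) -` \<int>)"
    by (intro continuous_closed_vimage closed_Ints isCont_divide) (use assms(1) in auto)
  then have "closed {z. Re z / w \<in> \<int>}"
    by (simp add: vimage_def)
  moreover have "open {z. \<exists>k::int. s < Im z + of_int k * h \<and> Im z + of_int k * h < h}"
    by (intro open_Collect_ex open_Collect_conj open_Collect_less continuous_intros)
  ultimately show ?thesis
    by (simp add: open_Un open_Collect_neg)
qed

lemma flat_isometric_refl0:
  assumes "w \<noteq> 0" "0 \<le> s" "s < h"
  shows "flat_isometric w h 0 s w h 0 s"
  unfolding flat_isometric_def
proof (intro exI[of _ id] conjI ballI impI)
  fix z assume "z \<in> int_lift w h 0 s"
  then show "\<exists>r>0. ball z r \<subseteq> int_lift w h 0 s \<and>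
                   (\<forall>a\<in>ball z r. \<forall>b\<in>ball z r. dist (id a) (id b) = dist a b)"
    using open_int_lift0[OF assms] open_contains_ball by auto
qed (use lat_zero in force)+

lemma unit_coords:
  assumes "cmod om = 1"
  shows "q = Complex (Re (q * cnj om)) (Im (q * cnj om)) * om"
proof -
  have "om * cnj om = 1"
    using assms complex_norm_square[of om] by simp
  then have "q * cnj om * om = q"
    by (metis mult.commute mult.left_neutral mult.assoc)
  moreover have "Complex (Re (q * cnj om)) (Im (q * cnj om)) = q * cnj om"
    by (rule complex_surj)
  ultimately show ?thesis
    by simp
qed

lemma cyl_param_add_line:
  assumes "cyl_param w h t s L om c eta" "z \<in> L"
  shows "z + of_real r * om \<in> L"
proof -
  obtain b where L: "L = {z. \<exists>u v. 0 < v \<and> v < eta \<and> z - (b + Complex u v * om) \<in> lat w h t}"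
    using assms(1) unfolding cyl_param_def by blast
  then obtain u v where "0 < v" "v < eta" "z - (b + Complex u v * om) \<in> lat w h t"
    using assms(2) by blast
  moreover have "z + of_real r * om - (b + Complex (u + r) v * om) = z - (b + Complex u v * om)"
    by (simp add: complex_eq_iff algebra_simps)
  ultimately show ?thesis
    unfolding L by (metis (mono_tags, lifting) mem_Collect_eq)
qed

lemma cyl_param_subset_int_lift:
  assumes "cyl_param w h t s L om c eta"
  shows "L \<subseteq> int_lift w h t s"
proof
  fix z assume "z \<in> L"
  moreover obtain b where
    L: "L = {z. \<exists>u v. 0 < v \<and> v < eta \<and> z - (b + Complex u v * om) \<in> lat w h t}" and
    I: "\<forall>u v. 0 < v \<and> v < eta \<longrightarrow> b + Complex u v * om \<in> int_lift w h t s"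
    using assms unfolding cyl_param_def by blast
  ultimately obtain u v where "0 < v" "v < eta" "z - (b + Complex u v * om) \<in> lat w h t"
    by blast
  then show "z \<in> int_lift w h t s"
    using I int_lift_add_lat[of "b + Complex u v * om" w h t s "z - (b + Complex u v * om)"] by auto
qed

text \<open>The diagonal cylinder of P(w,h,0,s): its core curves are parallel to w + ih, it starts at
the top of the slit and has height (h - s) w / |w + ih|.\<close>

definition diag_len :: "real \<Rightarrow> real \<Rightarrow> real" where
  "diag_len w h = sqrt (w\<^sup>2 + h\<^sup>2)"

definition diag_dir :: "real \<Rightarrow> real \<Rightarrow> complex" where
  "diag_dir w h = Complex (w / diag_len w h) (h / diag_len w h)"

definition diag_height :: "real \<Rightarrow> real \<Rightarrow> real \<Rightarrow> real" where
  "diag_height w h s = (h - s) * w / diag_len w h"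

definition diag_cyl :: "real \<Rightarrow> real \<Rightarrow> real \<Rightarrow> complex set" where
  "diag_cyl w h s = {z. \<exists>u v. 0 < v \<and> v < diag_height w h s \<and>
                       z - (Complex 0 s + Complex u v * diag_dir w h) \<in> lat w h 0}"

definition diag_offset :: "real \<Rightarrow> real \<Rightarrow> complex \<Rightarrow> real" where
  "diag_offset w h z = Im z - Re z * h / w"

lemma diag_len_pos: "w \<noteq> 0 \<Longrightarrow> 0 < diag_len w h"
  unfolding diag_len_def by (simp add: add_pos_nonneg)

lemma diag_cyl_area: "w \<noteq> 0 \<Longrightarrow> diag_len w h * diag_height w h s = w * (h - s)"
  using diag_len_pos[of w h] by (simp add: diag_height_def)

lemma norm_diag_dir: "w \<noteq> 0 \<Longrightarrow> cmod (diag_dir w h) = 1"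
  using diag_len_pos[of w h]
  by (simp add: diag_dir_def cmod_def diag_len_def power_divide add_divide_distrib[symmetric])

lemma diag_len_mult_diag_dir: "w \<noteq> 0 \<Longrightarrow> of_real (diag_len w h) * diag_dir w h = Complex w h"
  using diag_len_pos[of w h] by (simp add: diag_dir_def complex_eq_iff)

lemma diag_offset_add: "diag_offset w h (a + b) = diag_offset w h a + diag_offset w h b"
  unfolding diag_offset_def by (simp add: algebra_simps add_divide_distrib)

lemma diag_offset_diff: "diag_offset w h (a - b) = diag_offset w h a - diag_offset w h b"
  unfolding diag_offset_def by (simp add: algebra_simps diff_divide_distrib)

lemma diag_offset_of_real_mult: "diag_offset w h (of_real r * z) = r * diag_offset w h z"
  unfolding diag_offset_def by (simp add: algebra_simps)

lemma diag_offset_diag_dir: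
  assumes "w \<noteq> 0"
  shows "diag_offset w h (Complex u v * diag_dir w h) = v * diag_len w h / w"
proof -
  have c: "0 < diag_len w h"
    using diag_len_pos[OF assms] .
  have "diag_offset w h (Complex u v * diag_dir w h) = v * (w * w + h * h) / (w * diag_len w h)"
    using assms c by (simp add: diag_offset_def diag_dir_def field_simps)
  also have "w * w + h * h = diag_len w h * diag_len w h"
    unfolding diag_len_def by (simp flip: power2_eq_square)
  finally show ?thesis
    using assms c by simp
qed

lemma diag_offset_lat0:
  assumes "w \<noteq> 0" "l \<in> lat w h 0"
  shows "\<exists>k::int. diag_offset w h l = of_int k * h"
proof -
  obtain m n :: int where "l = Complex (of_int m * w) (of_int n * h)"
    using assms(2) unfolding mem_lat0_iff by blast
  then have "diag_offset w h l = of_int (n - m) * h"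
    using assms(1) by (simp add: diag_offset_def algebra_simps)
  then show ?thesis ..
qed

lemma diag_offset_slit_lift0:
  assumes "w \<noteq> 0" "z \<in> slit_lift w h 0 s"
  shows "\<exists>k::int. 0 \<le> diag_offset w h z + of_int k * h \<and> diag_offset w h z + of_int k * h \<le> s"
proof -
  obtain m k :: int where "Re z / w = of_int m" "0 \<le> Im z + of_int k * h" "Im z + of_int k * h \<le> s"
    using assms unfolding mem_slit_lift0_iff[OF assms(1)] by (auto elim!: Ints_cases)
  moreover have "diag_offset w h z = Im z - of_int m * h"
    using \<open>Re z / w = of_int m\<close> times_divide_eq_left[of "Re z" w h] by (simp add: diag_offset_def)
  ultimately show ?thesis
    by (intro exI[of _ "k + m"]) (simp add: algebra_simps)
qed

lemma Complex_vertical_mem_lat0: "Complex 0 (of_int k * h) \<in> lat w h 0"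
  unfolding mem_lat0_iff by (intro exI[of _ 0] exI[of _ k]) simp

lemma diag_height_bounds_iff:
  assumes "0 < w"
  shows "0 < v \<and> v < diag_height w h s \<longleftrightarrow>
           s < s + v * diag_len w h / w \<and> s + v * diag_len w h / w < h"
proof -
  have c: "0 < diag_len w h"
    using assms diag_len_pos by simp
  have "0 < v \<longleftrightarrow> 0 < v * diag_len w h / w"
    using assms c by (simp add: zero_less_divide_iff zero_less_mult_iff)
  moreover have "v < diag_height w h s \<longleftrightarrow> v * diag_len w h / w < h - s"
    using assms c by (simp add: diag_height_def field_simps)
  ultimately show ?thesis
    by linarith
qed

lemma diag_cyl_coords_inj:
  assumes "0 < w" "0 \<le> s" "s < h"
    and v: "0 < v" "v < diag_height w h s" "0 < v'" "v' < diag_height w h s"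
    and d: "Complex u v * diag_dir w h - Complex u' v' * diag_dir w h \<in> lat w h 0"
  shows "v = v' \<and> (u - u') / diag_len w h \<in> \<int>"
proof -
  let ?c = "diag_len w h" and ?om = "diag_dir w h"
  have c: "0 < ?c"
    using assms diag_len_pos by simp
  have "Complex u v * ?om - Complex u' v' * ?om = Complex (u - u') (v - v') * ?om"
    by (simp add: complex_eq_iff algebra_simps)
  then obtain m n :: int where mn: "Complex (u - u') (v - v') * ?om = Complex (of_int m * w) (of_int n * h)"
    using d unfolding mem_lat0_iff by auto
  have "(v - v') * ?c / w = of_int (n - m) * h"
    using arg_cong[OF mn, of "diag_offset w h"] assms
    by (simp add: diag_offset_diag_dir) (simp add: diag_offset_def algebra_simps)
  moreover have "\<bar>(v - v') * ?c / w\<bar> < h"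
  proof -
    have "s < s + v * ?c / w" "s + v * ?c / w < h" "s < s + v' * ?c / w" "s + v' * ?c / w < h"
      using v diag_height_bounds_iff[OF assms(1), of _ h s] by blast+
    then have "\<bar>v * ?c / w - v' * ?c / w\<bar> < h"
      using assms(2) by linarith
    then show ?thesis
      by (simp add: diff_divide_distrib left_diff_distrib)
  qed
  ultimately have "\<bar>of_int (n - m)\<bar> * h < 1 * h"
    using assms by (simp add: abs_mult)
  then have "n = m"
    using assms by (simp only: mult_less_cancel_right) linarith
  then have "v = v'"
    using \<open>(v - v') * ?c / w = of_int (n - m) * h\<close> assms c by simp
  have "of_real (u - u') * ?om = of_real (of_int m * ?c) * ?om"
    using mn \<open>n = m\<close> \<open>v = v'\<close> diag_len_mult_diag_dir[of w h] assms
    by (simp add: complex_eq_iff)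
  moreover have "?om \<noteq> 0"
    using norm_diag_dir[of w h] assms(1) by auto
  ultimately have "(of_real (u - u') :: complex) = of_real (of_int m * ?c)"
    by simp
  then have "u - u' = of_int m * ?c"
    by (simp only: of_real_eq_iff)
  with \<open>v = v'\<close> c show ?thesis
    by simp
qed

lemma mem_diag_cyl_iff:
  assumes "0 < w"
  shows "z \<in> diag_cyl w h s \<longleftrightarrow>
           (\<exists>k::int. s < diag_offset w h z + of_int k * h \<and> diag_offset w h z + of_int k * h < h)"
    (is "_ \<longleftrightarrow> (\<exists>k. ?gap k)")
proof -
  let ?c = "diag_len w h" and ?om = "diag_dir w h"
  have c: "0 < ?c"
    using assms diag_len_pos by simp
  note v_bounds = diag_height_bounds_iff[OF assms, of _ h s]
  show ?thesis
  proof
    assume "z \<in> diag_cyl w h s"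
    then obtain u v where v: "0 < v" "v < diag_height w h s"
      and l: "z - (Complex 0 s + Complex u v * ?om) \<in> lat w h 0"
      unfolding diag_cyl_def by blast
    obtain j :: int where "diag_offset w h (z - (Complex 0 s + Complex u v * ?om)) = of_int j * h"
      using diag_offset_lat0[OF _ l] assms by auto
    then have "diag_offset w h z + of_int (- j) * h = s + v * ?c / w"
      using assms by (simp add: diag_offset_diff diag_offset_add diag_offset_diag_dir)
        (simp add: diag_offset_def)
    then show "\<exists>k. ?gap k"
      using v v_bounds by metis
  next
    assume "\<exists>k. ?gap k"
    then obtain k :: int where k: "?gap k" ..
    define q where "q = z + Complex 0 (of_int k * h) - Complex 0 s"
    define u where "u = Re (q * cnj ?om)"
    define v where "v = Im (q * cnj ?om)"
    have q: "q = Complex u v * ?om"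
      unfolding u_def v_def by (rule unit_coords[OF norm_diag_dir]) (use assms in simp)
    have "s + v * ?c / w = diag_offset w h z + of_int k * h"
      using arg_cong[OF q, of "diag_offset w h"] assms
      by (simp add: q_def diag_offset_add diag_offset_diff diag_offset_diag_dir)
        (simp add: diag_offset_def)
    then have "0 < v" "v < diag_height w h s"
      using k v_bounds by metis+
    moreover have "z - (Complex 0 s + Complex u v * ?om) = Complex 0 (of_int (- k) * h)"
      unfolding q[symmetric] q_def by (simp add: complex_eq_iff)
    then have "z - (Complex 0 s + Complex u v * ?om) \<in> lat w h 0"
      by (simp only: Complex_vertical_mem_lat0)
    ultimately show "z \<in> diag_cyl w h s"
      unfolding diag_cyl_def by blast
  qed
qed

lemma diag_cyl_subset_int_lift:
  assumes "0 < w" "0 \<le> s" "s < h"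
  shows "diag_cyl w h s \<subseteq> int_lift w h 0 s"
  using assms diag_offset_slit_lift0[of w _ h s]
  by (auto simp: int_lift_def mem_diag_cyl_iff ex_int_shift_in_gap_iff)

lemma diag_cyl_param:
  assumes "0 < w" "0 \<le> s" "s < h"
  shows "cyl_param w h 0 s (diag_cyl w h s) (diag_dir w h) (diag_len w h) (diag_height w h s)"
proof -
  let ?c = "diag_len w h" and ?om = "diag_dir w h" and ?eta = "diag_height w h s"
  have c: "0 < ?c"
    using assms diag_len_pos by simp
  have om: "cmod ?om = 1"
    using assms norm_diag_dir by simp
  have "of_real ?c * ?om \<in> lat w h 0"
    using assms by (simp add: diag_len_mult_diag_dir mem_lat0_iff)
  moreover have "Complex 0 s + Complex u v * ?om \<in> int_lift w h 0 s" if "0 < v" "v < ?eta" for u v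
  proof -
    have "Complex 0 s + Complex u v * ?om \<in> diag_cyl w h s"
      unfolding diag_cyl_def using that lat_zero by (intro CollectI exI[of _ u] exI[of _ v]) simp
    then show ?thesis
      using diag_cyl_subset_int_lift[OF assms] by blast
  qed
  moreover have "v = v' \<and> (u - u') / ?c \<in> \<int>"
    if "0 < v" "v < ?eta" "0 < v'" "v' < ?eta"
      and "(Complex 0 s + Complex u v * ?om) - (Complex 0 s + Complex u' v' * ?om) \<in> lat w h 0"
    for u v u' v'
    using diag_cyl_coords_inj[OF assms that(1-4)] that(5) by simp
  moreover have "0 < ?eta"
    using assms c by (simp add: diag_height_def)
  ultimately show ?thesis
    unfolding cyl_param_def diag_cyl_def using c om by blast
qed

lemma cylinder_diag_cyl:
  assumes "0 < w" "0 \<le> s" "s < h"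
  shows "cylinder w h 0 s (diag_cyl w h s) (diag_dir w h) (diag_len w h) (diag_height w h s)"
  unfolding cylinder_def
proof (intro conjI allI impI)
  show "cyl_param w h 0 s (diag_cyl w h s) (diag_dir w h) (diag_len w h) (diag_height w h s)"
    using diag_cyl_param[OF assms] .
  fix L' assume "is_cyl w h 0 s L' \<and> diag_cyl w h s \<subseteq> L'"
  then obtain om c eta where L': "cyl_param w h 0 s L' om c eta" and sub: "diag_cyl w h s \<subseteq> L'"
    unfolding is_cyl_def by blast
  have om: "cmod om = 1"
    using L' unfolding cyl_param_def by blast
  have int: "L' \<subseteq> int_lift w h 0 s"
    using cyl_param_subset_int_lift[OF L'] .
  txt \<open>A line of direction om not parallel to the diagonal meets both the diagonal cylinder and
    the slit point 0; a parallel line either lies in the diagonal cylinder or meets the slit.\<close>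
  have "L' \<subseteq> diag_cyl w h s"
  proof (cases "diag_offset w h om = 0")
    case False
    define r where "r = (s + h) / 2 / diag_offset w h om"
    have "diag_offset w h (of_real r * om) = (s + h) / 2"
      unfolding diag_offset_of_real_mult r_def using False by simp
    then have "of_real r * om \<in> diag_cyl w h s"
      using assms by (auto simp: mem_diag_cyl_iff intro!: exI[of _ 0])
    then have "of_real r * om + of_real (- r) * om \<in> int_lift w h 0 s"
      using sub int cyl_param_add_line[OF L'] by blast
    then show ?thesis
      using zero_notin_int_lift[OF assms(2)] by (simp add: algebra_simps)
  next
    case True
    have Re_om: "Re om \<noteq> 0"
    proof
      assume "Re om = 0"
      then have "om = 0"
        using True by (simp add: diag_offset_def complex_eq_iff)
      then show False
        using om by simp
    qed
    show ?thesis
    proof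
      fix z assume z: "z \<in> L'"
      show "z \<in> diag_cyl w h s"
      proof (rule ccontr)
        assume "z \<notin> diag_cyl w h s"
        then obtain k :: int where k: "0 \<le> diag_offset w h z + of_int k * h"
          "diag_offset w h z + of_int k * h \<le> s"
          using assms by (auto simp: mem_diag_cyl_iff ex_int_shift_in_gap_iff)
        define p where "p = z + of_real (- Re z / Re om) * om"
        have "Re p = 0"
          using Re_om by (simp add: p_def)
        moreover have "diag_offset w h p = diag_offset w h z"
          unfolding p_def diag_offset_add diag_offset_of_real_mult using True by simp
        ultimately have "p \<in> slit_lift w h 0 s"
          using assms k by (auto simp: mem_slit_lift0_iff diag_offset_def)
        moreover have "p \<in> int_lift w h 0 s"
          using z int cyl_param_add_line[OF L'] unfolding p_def by blast
        ultimately show False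
          by (simp add: int_lift_def)
      qed
    qed
  qed
  then show "L' = diag_cyl w h s"
    using sub by blast
qed

lemma lat_normal_projection:
  assumes "c \<noteq> 0" "of_real c * om = Complex (of_int m * w - of_int n * t) (of_int n * h)"
    and "coprime m n"
  shows "\<exists>l \<in> lat w h t. Im (l * cnj om) = w * h / c"
proof -
  obtain u v :: int where uv: "u * m + v * n = 1"
    using bezout_int[of m n] assms(3) by (auto simp: coprime_iff_gcd_eq_1)
  define l where "l = Complex (- of_int v * w - of_int u * t) (of_int u * h)"
  have l: "l \<in> lat w h t"
    unfolding l_def mem_lat_iff by (intro exI[of _ "- v"] exI[of _ u]) simp
  have re: "c * Re om = of_int m * w - of_int n * t" and im: "c * Im om = of_int n * h"
    using arg_cong[OF assms(2), of Re] arg_cong[OF assms(2), of Im] by simp_all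
  have "c * Im (l * cnj om) = Im l * (c * Re om) - Re l * (c * Im om)"
    by (simp add: algebra_simps)
  also have "\<dots> = w * h * of_int (u * m + v * n)"
    unfolding re im by (simp add: l_def algebra_simps)
  finally have "c * Im (l * cnj om) = w * h"
    using uv by simp
  then show ?thesis
    using l assms(1) by (auto simp: field_simps)
qed

lemma cyl_param_circumference_coprime:
  assumes "cyl_param w h t s L om c eta"
    and mn: "of_real c * om = Complex (of_int m * w - of_int n * t) (of_int n * h)"
  shows "coprime m n"
proof -
  obtain b where c: "0 < c" and eta: "0 < eta" and om: "cmod om = 1"
    and inj: "\<forall>u v u' v'. 0 < v \<and> v < eta \<and> 0 < v' \<and> v' < eta \<and>
                (b + Complex u v * om) - (b + Complex u' v' * om) \<in> lat w h t
                \<longrightarrow> v = v' \<and> (u - u') / c \<in> \<int>"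
    using assms(1) unfolding cyl_param_def by blast
  define g where "g = gcd m n"
  obtain m' n' where m': "m = g * m'" and n': "n = g * n'"
    unfolding g_def by (meson dvd_def gcd_dvd1 gcd_dvd2)
  have "g \<noteq> 0"
  proof
    assume "g = 0"
    then have "of_real c * om = 0"
      using mn by (simp add: g_def complex_eq_iff)
    then show False
      using c om by simp
  qed
  then have g: "0 < g"
    unfolding g_def by (simp add: order_le_neq_trans)
  txt \<open>If g > 1, the lattice vector l = c om / g would identify points of a core curve at
    distance c / g < c.\<close>
  define l where "l = Complex (of_int m' * w - of_int n' * t) (of_int n' * h)"
  have "l \<in> lat w h t"
    unfolding l_def mem_lat_iff by blast
  moreover have "of_real c * om = of_int g * l"
    unfolding mn l_def m' n' by (simp add: complex_eq_iff algebra_simps)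
  then have "(b + Complex (c / of_int g) (eta / 2) * om) - (b + Complex 0 (eta / 2) * om) = l"
    using g by (simp add: complex_eq_iff field_simps)
  ultimately have "(c / of_int g - 0) / c \<in> \<int>"
    using inj[rule_format, of "eta / 2" "eta / 2" "c / of_int g" 0] eta by simp
  then have "1 / of_int g \<in> (\<int> :: real set)"
    using c by simp
  then obtain k :: int where k: "1 / of_int g = (of_int k :: real)"
    by (auto elim!: Ints_cases)
  have "(0 :: real) < of_int k" "of_int k \<le> (1 :: real)"
    using g by (simp_all flip: k)
  then have "k = 1"
    by linarith
  then show ?thesis
    using k g by (simp add: coprime_iff_gcd_eq_1 g_def)
qed

lemma periodic_interval_gap_bound:
  fixes a L W e :: real
  assumes W: "0 < W" and e: "0 < e" and L: "0 \<le> L"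
    and avoid: "\<And>x k. a \<le> x \<Longrightarrow> x \<le> a + L \<Longrightarrow> \<not> (0 < x + of_int k * W \<and> x + of_int k * W < e)"
  shows "e + L \<le> W"
proof (rule ccontr)
  assume long: "\<not> e + L \<le> W"
  define j where "j = \<lceil>a / W\<rceil> - 1"
  define r where "r = a - of_int j * W"
  have r: "0 < r" "r \<le> W"
    using ceiling_divide_lower[OF W, of a] ceiling_divide_upper[OF W, of a]
    by (simp_all add: r_def j_def algebra_simps)
  show False
  proof (cases "r < e")
    case True
    then show False
      using avoid[of a "- j"] r L by (simp add: r_def)
  next
    case False
    define d where "d = min e (L - (W - r)) / 2"
    have d: "0 < d" "d < e" "d < L - (W - r)"
      using long False e unfolding d_def by auto
    then show False
      using avoid[of "a + (W - r) + d" "- j - 1"] r by (simp add: r_def algebra_simps)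
  qed
qed

lemma periodic_segment_gap_bound:
  fixes a b W e s :: real
  assumes "0 < W" "0 < e" "0 \<le> s"
    and avoid: "\<And>y k. 0 \<le> y \<Longrightarrow> y \<le> s \<Longrightarrow>
                  \<not> (0 < a + b * y + of_int k * W \<and> a + b * y + of_int k * W < e)"
  shows "e + s * \<bar>b\<bar> \<le> W"
proof (rule periodic_interval_gap_bound[OF assms(1,2), of "s * \<bar>b\<bar>" "min a (a + b * s)"])
  fix x k
  assume x: "min a (a + b * s) \<le> x" "x \<le> min a (a + b * s) + s * \<bar>b\<bar>"
  txt \<open>For b = 0 the segment is the point a and (x - a) / b = 0.\<close>
  consider "0 < b" | "b < 0" | "b = 0"
    by linarith
  then have "0 \<le> (x - a) / b \<and> (x - a) / b \<le> s \<and> a + b * ((x - a) / b) = x"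
    by cases (use x assms(3) in \<open>auto simp: min_def field_simps split: if_splits\<close>)
  then show "\<not> (0 < x + of_int k * W \<and> x + of_int k * W < e)"
    using avoid[of "(x - a) / b" k] by simp
qed (use assms(3) in simp)

lemma cyl_param_height_bound:
  assumes "cyl_param w h t s L om c eta" "0 < w" "0 < h" "0 \<le> s"
  shows "c * eta + c * s * \<bar>Re om\<bar> \<le> w * h"
proof -
  obtain b where c: "0 < c" and eta: "0 < eta" and om: "cmod om = 1"
    and circ: "of_real c * om \<in> lat w h t"
    and avoid: "\<forall>u v. 0 < v \<and> v < eta \<longrightarrow> b + Complex u v * om \<in> int_lift w h t s"
    using assms(1) unfolding cyl_param_def by blast
  obtain m n :: int where mn: "of_real c * om = Complex (of_int m * w - of_int n * t) (of_int n * h)"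
    using circ unfolding mem_lat_iff by blast
  obtain l where l: "l \<in> lat w h t" and proj_l: "Im (l * cnj om) = w * h / c"
    using lat_normal_projection[OF _ mn cyl_param_circumference_coprime[OF assms(1) mn]] c by auto
  txt \<open>The coordinate Im (z * cnj om) transverse to the core curves maps the lattice onto
    (w h / c) \<int> and the slit onto an interval of slope Re om; the height interval (0, eta) must
    avoid all its translates.\<close>
  have "eta + s * \<bar>Re om\<bar> \<le> w * h / c"
  proof (rule periodic_segment_gap_bound[of _ _ s "- Im (b * cnj om)"])
    fix y k
    assume y: "0 \<le> y" "y \<le> s"
    define q where "q = Complex 0 y + of_int k * l - b"
    have "Im (q * cnj om) = Im (Complex 0 y * cnj om) + of_int k * Im (l * cnj om) - Im (b * cnj om)"
      by (simp add: q_def ring_distribs del: complex_cnj_mult)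
    then have "Im (q * cnj om) = - Im (b * cnj om) + Re om * y + of_int k * (w * h / c)"
      unfolding proj_l by simp
    moreover have "b + Complex (Re (q * cnj om)) (Im (q * cnj om)) * om = Complex 0 y + of_int k * l"
      unfolding unit_coords[OF om, of q, symmetric] by (simp add: q_def)
    moreover have "Complex 0 y + of_int k * l \<notin> int_lift w h t s"
      using Complex_add_lat_mem_slit_lift[OF y lat_of_int_mult[OF l]] by (simp add: int_lift_def)
    ultimately show "\<not> (0 < - Im (b * cnj om) + Re om * y + of_int k * (w * h / c) \<and>
                       - Im (b * cnj om) + Re om * y + of_int k * (w * h / c) < eta)"
      using avoid by metis
  qed (use assms(2-4) c eta in simp_all)
  then show ?thesis
    using c by (simp add: field_simps)
qed

lemma cyl_param_slope_area_bound:
  assumes cyl: "cyl_param w h t s L om c eta" and "0 < w" "0 < h" "0 \<le> s" "0 < w'"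
    and slope: "Re om * h = Im om * w'"
  shows "\<exists>m n :: int. n \<noteq> 0 \<and> of_int m * w - of_int n * t = of_int n * w' \<and>
                     c * eta + s * \<bar>of_int n\<bar> * w' \<le> w * h"
proof -
  have c: "0 < c" and om: "cmod om = 1" and "of_real c * om \<in> lat w h t"
    using cyl unfolding cyl_param_def by blast+
  then obtain m n :: int where mn: "of_real c * om = Complex (of_int m * w - of_int n * t) (of_int n * h)"
    unfolding mem_lat_iff by blast
  have re: "c * Re om = of_int m * w - of_int n * t" and im: "c * Im om = of_int n * h"
    using arg_cong[OF mn, of Re] arg_cong[OF mn, of Im] by simp_all
  have "c * Re om * h = of_int n * w' * h"
    using slope im by (metis mult.assoc mult.commute)
  then have c_Re: "c * Re om = of_int n * w'"
    using assms(3) by simp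
  have n: "n \<noteq> 0"
  proof
    assume "n = 0"
    then have "om = 0"
      using c c_Re im by (simp add: complex_eq_iff)
    then show False
      using om by simp
  qed
  have "c * s * \<bar>Re om\<bar> = s * \<bar>of_int n\<bar> * w'"
  proof -
    have "c * s * \<bar>Re om\<bar> = s * \<bar>c * Re om\<bar>"
      using c by (simp add: abs_mult)
    then show ?thesis
      unfolding c_Re using assms(5) by (simp add: abs_mult)
  qed
  then have "c * eta + s * \<bar>of_int n\<bar> * w' \<le> w * h"
    using cyl_param_height_bound[OF cyl assms(2-4)] by linarith
  moreover have "of_int m * w - of_int n * t = of_int n * w'"
    using re c_Re by simp
  ultimately show ?thesis
    using n by blast
qed

lemma lattice_shear_rigidity:
  fixes m n :: int and w w' t :: real
  assumes "0 < w" "w \<le> w'" "\<bar>of_int n\<bar> * w' \<le> w" "n \<noteq> 0"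
    and shear: "of_int m * w - of_int n * t = of_int n * w'" and "0 \<le> t" "t < w"
  shows "w' = w \<and> t = 0"
proof -
  have n1: "1 \<le> \<bar>of_int n :: real\<bar>"
    using assms(4) by linarith
  then have "1 * w' \<le> \<bar>of_int n\<bar> * w'"
    using assms(1,2) by (intro mult_right_mono) simp_all
  then have w': "w' = w"
    using assms(2,3) by linarith
  then have "\<bar>of_int n\<bar> * w \<le> 1 * w"
    using assms(3) by simp
  then have "of_int \<bar>n\<bar> \<le> (1 :: real)"
    using assms(1) by (simp add: mult_le_cancel_right)
  then have "\<bar>n\<bar> = 1"
    using assms(4) by linarith
  then have nn: "of_int n * of_int n = (1 :: real)"
    by (cases "0 \<le> n") simp_all
  define j where "j = n * (m - n)"
  have "t = of_int n * (of_int n * t)"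
    using nn by (simp add: mult.assoc[symmetric])
  also have "of_int n * t = of_int (m - n) * w"
    using shear w' by (simp add: algebra_simps)
  also have "of_int n * (of_int (m - n) * w) = of_int j * w"
    by (simp add: j_def)
  finally have t: "t = of_int j * w" .
  then have "0 \<le> of_int j * w" "of_int j * w < 1 * w"
    using assms(6,7) by simp_all
  then have "0 \<le> j" "j < 1"
    using assms(1) by (simp_all add: zero_le_mult_iff mult_less_cancel_right)
  then show ?thesis
    using t w' by simp
qed

theorem lemma8p1:
  fixes h s w1 w2 t :: real
  assumes "0 < s" and "s < h" and "0 < w1" and "0 < w2" and "0 \<le> t" and "t < w2"
    and "surf_area w1 h \<ge> surf_area w2 h"
    and "\<forall>L1 om1 c1 eta1. cylinder w1 h 0 s L1 om1 c1 eta1 \<longrightarrow>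
           (\<exists>L2 om2 c2 eta2. cylinder w2 h t s L2 om2 c2 eta2 \<and>
              (om2 = om1 \<or> om2 = - om1) \<and>
              c1 * eta1 / surf_area w1 h = c2 * eta2 / surf_area w2 h)"
  shows "flat_isometric w2 h t s w1 h 0 s"
proof -
  have h: "0 < h"
    using assms(1,2) by simp
  obtain L2 om2 c2 eta2 where cyl2: "cyl_param w2 h t s L2 om2 c2 eta2"
    and dir: "om2 = diag_dir w1 h \<or> om2 = - diag_dir w1 h"
    and area: "diag_len w1 h * diag_height w1 h s / surf_area w1 h = c2 * eta2 / surf_area w2 h"
    using assms(8)[rule_format, OF cylinder_diag_cyl[of w1 s h]] assms(1-3)
    unfolding cylinder_def by auto
  have "w1 * (h - s) / (w1 * h) = c2 * eta2 / (w2 * h)"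
    using area assms(3) by (simp add: diag_cyl_area surf_area_def)
  then have "h * w1 * (c2 * eta2) = h * w1 * (w2 * (h - s))"
    using assms(3,4) h by (simp add: field_simps)
  then have area2: "c2 * eta2 = w2 * (h - s)"
    using assms(3) h by simp
  have "Re om2 * h = Im om2 * w1"
    using dir by (auto simp: diag_dir_def)
  then obtain m n :: int where "n \<noteq> 0" and shear: "of_int m * w2 - of_int n * t = of_int n * w1"
    and bound: "c2 * eta2 + s * \<bar>of_int n\<bar> * w1 \<le> w2 * h"
    using cyl_param_slope_area_bound[OF cyl2 assms(4) h _ assms(3)] assms(1) by auto
  have "\<bar>of_int n\<bar> * w1 \<le> w2"
    using bound assms(1) unfolding area2 by (simp add: algebra_simps)
  moreover have "w2 \<le> w1"
    using assms(7) h by (simp add: surf_area_def)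
  ultimately have "w1 = w2 \<and> t = 0"
    using lattice_shear_rigidity[OF assms(4) _ _ \<open>n \<noteq> 0\<close> shear assms(5,6)] by blast
  then show ?thesis
    using flat_isometric_refl0[of w1 s h] assms(1-3) by simp
qed

end
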